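(* Given a set cover instance with ground set $E$ ($|E|=n$) and sets $X_1,\dots,X_m$ with $\bigcup_i X_i=E$, let $I$ be the 2-D Euclidean g2g-anycast instance constructed from it as described in the context. If an optimal solution of $I$ has cost $C$, then the set cover instance has a cover using at most $C/2$ sets.
   Context: In 2-D Euclidean g2g-anycast ($\kappa=2$), the nodes are points in $\mathbb{R}^2$, there is a source group $S$ and destination groups with demands $(S,T)$, and broadcast and funnel costs are both $\|u-v\|^2$. A solution assigns to each $s\in S$ a radius $\rho_s\ge0$, a set $A_s$ of nodes with $\|s-t\|^2\le\rho_s$ for $t\in A_s$, and a tree $H_s$ on nodes containing $\{s\}\cup A_s$. It is feasible if every destination group meets some $A_s$. Its cost is $\sum_s\rho_s+\sum_s\sum_{uv\in H_s}\|u-v\|^2$. Construction of $I$: - Choose points $x_1,\dots,x_m\in\mathbb{R}^2$ with pairwise distances at least $D$, where $(D-2)^2>2m$. - For each $i$, choose a point $y_i$ with $\|x_i-y_i\|=1$. - The source group is $S=\{x_1,\dots,x_m\}$. - For each element $e\in E$, the destination group $T_e$ consists of one terminal node $t(e)_i$ located at $y_i$ for each $i$ with $e\in X_i$. - The demands are $(S,T_e)$ for all $e\in E$. *)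

theory Defs
  imports "HOL-Analysis.Analysis"
begin

text \<open>Nodes of the constructed instance: the source node for set index i, and the
terminal node t(e)_i for element e and set index i.\<close>
datatype 'e node = Src nat | Term 'e nat

definition inst_nodes :: "nat \<Rightarrow> (nat \<Rightarrow> 'e set) \<Rightarrow> 'e node set" where
  "inst_nodes m X = Src ` {1..m} \<union> {Term e i | e i. i \<in> {1..m} \<and> e \<in> X i}"

definition dest_group :: "nat \<Rightarrow> (nat \<Rightarrow> 'e set) \<Rightarrow> 'e \<Rightarrow> 'e node set" where
  "dest_group m X e = {Term e i | i. i \<in> {1..m} \<and> e \<in> X i}"

fun loc :: "(nat \<Rightarrow> real^2) \<Rightarrow> (nat \<Rightarrow> real^2) \<Rightarrow> 'e node \<Rightarrow> real^2" where
  "loc x y (Src i) = x i"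
| "loc x y (Term e i) = y i"

definition is_tree :: "'a set \<Rightarrow> 'a set \<Rightarrow> 'a set set \<Rightarrow> bool" where
  "is_tree V W F \<longleftrightarrow> W \<subseteq> V \<and> finite W \<and>
     F \<subseteq> {{u, v} | u v. u \<in> W \<and> v \<in> W \<and> u \<noteq> v} \<and>
     (\<forall>u\<in>W. \<forall>v\<in>W. (u, v) \<in> {(a, b). {a, b} \<in> F}\<^sup>*) \<and>
     card F + 1 = card W"

definition edge_cost :: "(nat \<Rightarrow> real^2) \<Rightarrow> (nat \<Rightarrow> real^2) \<Rightarrow> 'e node set \<Rightarrow> real" where
  "edge_cost x y f = (THE c. \<exists>u v. f = {u, v} \<and> c = (norm (loc x y u - loc x y v))\<^sup>2)"

text \<open>Feasible solution: for each source x_i (i in 1..m) a radius rho i, a set A i of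
nodes within broadcast range, and a tree (W i, F i) containing x_i and A i.\<close>
definition g2g_feasible ::
  "nat \<Rightarrow> (nat \<Rightarrow> 'e set) \<Rightarrow> 'e set \<Rightarrow> (nat \<Rightarrow> real^2) \<Rightarrow> (nat \<Rightarrow> real^2) \<Rightarrow>
   (nat \<Rightarrow> real) \<Rightarrow> (nat \<Rightarrow> 'e node set) \<Rightarrow> (nat \<Rightarrow> 'e node set) \<Rightarrow> (nat \<Rightarrow> 'e node set set) \<Rightarrow> bool"
  where
  "g2g_feasible m X E x y rho A W F \<longleftrightarrow>
     (\<forall>i\<in>{1..m}.
        rho i \<ge> 0 \<and> A i \<subseteq> inst_nodes m X \<and>
        (\<forall>t\<in>A i. (norm (x i - loc x y t))\<^sup>2 \<le> rho i) \<and>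
        is_tree (inst_nodes m X) (W i) (F i) \<and> insert (Src i) (A i) \<subseteq> W i) \<and>
     (\<forall>e\<in>E. \<exists>i\<in>{1..m}. dest_group m X e \<inter> A i \<noteq> {})"

definition g2g_cost ::
  "nat \<Rightarrow> (nat \<Rightarrow> real^2) \<Rightarrow> (nat \<Rightarrow> real^2) \<Rightarrow> (nat \<Rightarrow> real) \<Rightarrow> (nat \<Rightarrow> 'e node set set) \<Rightarrow> real"
  where
  "g2g_cost m x y rho F = (\<Sum>i\<in>{1..m}. rho i) + (\<Sum>i\<in>{1..m}. \<Sum>f\<in>F i. edge_cost x y f)"

end

theory Submission
  imports Defs
begin

text \<open>Every source whose broadcast reaches its own terminal pays at least 1 for the radius and,
since its tree must connect it to that terminal, at least 1 for the tree edge leaving it: all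
nodes other than x_i are at distance at least 1 from x_i. So the sources reaching their own
terminal number at most C/2. If C < 2m, every radius is below 2m < (D-2)^2, too small to reach
any foreign terminal, so each demand is served by a source reaching its own terminal, and these
sources form a cover. If C \<ge> 2m, all m sets already suffice.\<close>

lemma edge_cost_doubleton: "edge_cost x y {u, v} = (norm (loc x y u - loc x y v))\<^sup>2"
  unfolding edge_cost_def
proof (rule the_equality)
  fix c assume "\<exists>u' v'. {u, v} = {u', v'} \<and> c = (norm (loc x y u' - loc x y v'))\<^sup>2"
  then obtain u' v' where "{u, v} = {u', v'}" "c = (norm (loc x y u' - loc x y v'))\<^sup>2" by blast
  then show "c = (norm (loc x y u - loc x y v))\<^sup>2"
    by (auto simp: doubleton_eq_iff norm_minus_commute)
qed blast

lemma is_tree_edgeD: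
  assumes "is_tree V W F" "f \<in> F"
  obtains u v where "f = {u, v}" "u \<in> W" "v \<in> W" "u \<noteq> v"
  using assms unfolding is_tree_def by blast

lemma finite_tree_edges:
  assumes "is_tree V W F" shows "finite F"
proof -
  have "F \<subseteq> Pow W" "finite W" using assms unfolding is_tree_def by auto
  then show ?thesis by (meson finite_Pow_iff finite_subset)
qed

lemma tree_edge_cost_nonneg: "is_tree V W F \<Longrightarrow> f \<in> F \<Longrightarrow> 0 \<le> edge_cost x y f"
  by (auto elim!: is_tree_edgeD simp: edge_cost_doubleton)

lemma tree_cost_nonneg: "is_tree V W F \<Longrightarrow> 0 \<le> (\<Sum>f\<in>F. edge_cost x y f)"
  by (rule sum_nonneg) (rule tree_edge_cost_nonneg)

lemma edge_cost_le_tree_cost: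
  assumes "is_tree V W F" "f \<in> F"
  shows "edge_cost x y f \<le> (\<Sum>f\<in>F. edge_cost x y f)"
  using assms by (intro member_le_sum) (auto intro: tree_edge_cost_nonneg[OF assms(1)]
      finite_tree_edges[OF assms(1)])

lemma is_tree_edge_at:
  assumes tree: "is_tree V W F" and "u \<in> W" "v \<in> W" "u \<noteq> v"
  obtains b where "{u, b} \<in> F" "b \<in> W" "b \<noteq> u"
proof -
  have "(u, v) \<in> {(a, b). {a, b} \<in> F}\<^sup>*"
    using assms unfolding is_tree_def by blast
  then obtain b where b: "{u, b} \<in> F"
    using \<open>u \<noteq> v\<close> by (cases rule: converse_rtranclE) auto
  obtain p q where "{u, b} = {p, q}" "p \<in> W" "q \<in> W" "p \<noteq> q"
    using tree b by (rule is_tree_edgeD)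
  then have "b \<in> W" "b \<noteq> u" by (auto simp: doubleton_eq_iff)
  with b show thesis by (rule that)
qed

lemma partial_cost_le_cost:
  assumes feas: "g2g_feasible m X E x y rho A W F" and J: "J \<subseteq> {1..m}"
  shows "(\<Sum>i\<in>J. rho i + (\<Sum>f\<in>F i. edge_cost x y f)) \<le> g2g_cost m x y rho F"
proof -
  have "0 \<le> rho i + (\<Sum>f\<in>F i. edge_cost x y f)" if "i \<in> {1..m}" for i
    using feas that tree_cost_nonneg unfolding g2g_feasible_def by (metis add_nonneg_nonneg)
  then have "(\<Sum>i\<in>J. rho i + (\<Sum>f\<in>F i. edge_cost x y f))
      \<le> (\<Sum>i\<in>{1..m}. rho i + (\<Sum>f\<in>F i. edge_cost x y f))"
    using J by (intro sum_mono2) auto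
  then show ?thesis unfolding g2g_cost_def by (simp add: sum.distrib)
qed

definition own_terminal_sources :: "nat \<Rightarrow> (nat \<Rightarrow> 'e node set) \<Rightarrow> nat set" where
  "own_terminal_sources m A = {i \<in> {1..m}. \<exists>e. Term e i \<in> A i}"

locale separated_instance =
  fixes m :: nat and D :: real and x y :: "nat \<Rightarrow> real^2"
  assumes D_pos: "0 < D"
    and D_big: "2 * real m < (D - 2)\<^sup>2"
    and sources_apart: "\<And>i j. i \<in> {1..m} \<Longrightarrow> j \<in> {1..m} \<Longrightarrow> i \<noteq> j \<Longrightarrow> D \<le> dist (x i) (x j)"
    and terminal_offset: "\<And>i. i \<in> {1..m} \<Longrightarrow> dist (x i) (y i) = 1"
begin

lemma D_gt_4:
  assumes "i \<in> {1..m}" "j \<in> {1..m}" "i \<noteq> j"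
  shows "4 < D"
proof (rule ccontr)
  assume "\<not> 4 < D"
  then have "(D - 2)\<^sup>2 \<le> 4"
    using D_pos by (simp add: power2_eq_square algebra_simps mult_nonneg_nonpos)
  moreover have "2 \<le> m" using assms by auto
  ultimately show False using D_big by simp
qed

lemma dist_source_foreign_terminal:
  assumes "i \<in> {1..m}" "j \<in> {1..m}" "i \<noteq> j"
  shows "D - 1 \<le> dist (x i) (y j)"
  using sources_apart[OF assms] terminal_offset[OF assms(2)]
    dist_triangle[of "x i" "x j" "y j"] by (simp add: dist_commute)

lemma terminal_within_budget_is_own:
  assumes "i \<in> {1..m}" "j \<in> {1..m}" "(dist (x i) (y j))\<^sup>2 < 2 * real m"
  shows "j = i"
proof (rule ccontr)
  assume "j \<noteq> i"
  then have D: "4 < D" and far: "D - 1 \<le> dist (x i) (y j)"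
    using D_gt_4 dist_source_foreign_terminal assms by auto
  then have "(D - 1)\<^sup>2 \<le> (dist (x i) (y j))\<^sup>2" by (intro power_mono) auto
  with assms(3) D_big D show False by (simp add: power2_eq_square algebra_simps)
qed

lemma source_edge_cost_ge_1:
  assumes i: "i \<in> {1..m}" and b: "b \<in> inst_nodes m X" "b \<noteq> Src i"
  shows "1 \<le> edge_cost x y {Src i, b}"
proof -
  have "1 \<le> dist (x i) (loc x y b)"
  proof (cases b)
    case (Src j)
    with b have "j \<in> {1..m}" "j \<noteq> i" unfolding inst_nodes_def by auto
    with i show ?thesis using sources_apart D_gt_4 Src by fastforce
  next
    case (Term e j)
    with b have j: "j \<in> {1..m}" unfolding inst_nodes_def by auto
    show ?thesis
    proof (cases "j = i")
      case True
      then show ?thesis using terminal_offset i Term by simp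
    next
      case False
      then show ?thesis using dist_source_foreign_terminal D_gt_4 i j Term by fastforce
    qed
  qed
  then show ?thesis by (simp add: edge_cost_doubleton dist_norm one_le_power)
qed

lemma own_terminal_cost_ge_2:
  assumes feas: "g2g_feasible m X E x y rho A W F"
    and i: "i \<in> {1..m}" and own: "Term e i \<in> A i"
  shows "2 \<le> rho i + (\<Sum>f\<in>F i. edge_cost x y f)"
proof -
  have tree: "is_tree (inst_nodes m X) (W i) (F i)"
    and sub: "insert (Src i) (A i) \<subseteq> W i"
    and reach: "(norm (x i - y i))\<^sup>2 \<le> rho i"
    using feas i own unfolding g2g_feasible_def by (blast, blast, force)
  have "1 \<le> rho i" using reach terminal_offset[OF i] by (simp add: dist_norm)
  moreover obtain b where b: "{Src i, b} \<in> F i" "b \<in> W i" "b \<noteq> Src i"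
    using is_tree_edge_at[OF tree, of "Src i" "Term e i"] sub own by auto
  have "b \<in> inst_nodes m X" using tree b(2) unfolding is_tree_def by blast
  then have "1 \<le> edge_cost x y {Src i, b}" by (rule source_edge_cost_ge_1[OF i _ b(3)])
  then have "1 \<le> (\<Sum>f\<in>F i. edge_cost x y f)"
    using edge_cost_le_tree_cost[OF tree b(1)] by (rule order_trans)
  ultimately show ?thesis by simp
qed

lemma own_terminal_sources_cover:
  assumes feas: "g2g_feasible m X E x y rho A W F"
    and cheap: "g2g_cost m x y rho F < 2 * real m"
  shows "E \<subseteq> (\<Union>i\<in>own_terminal_sources m A. X i)"
proof
  fix e assume "e \<in> E"
  then obtain i j where ij: "i \<in> {1..m}" "j \<in> {1..m}" "e \<in> X j" "Term e j \<in> A i"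
    using feas unfolding g2g_feasible_def dest_group_def by blast
  have tree: "is_tree (inst_nodes m X) (W i) (F i)"
    and reach: "(norm (x i - loc x y (Term e j)))\<^sup>2 \<le> rho i"
    using feas ij unfolding g2g_feasible_def by blast+
  have "rho i + (\<Sum>f\<in>F i. edge_cost x y f) \<le> g2g_cost m x y rho F"
    using partial_cost_le_cost[OF feas, of "{i}"] ij(1) by simp
  with tree_cost_nonneg[OF tree, of x y] reach cheap
  have "(dist (x i) (y j))\<^sup>2 < 2 * real m" by (simp add: dist_norm)
  then have "j = i" using terminal_within_budget_is_own ij by blast
  with ij show "e \<in> (\<Union>i\<in>own_terminal_sources m A. X i)"
    unfolding own_terminal_sources_def by blast
qed

lemma card_own_terminal_sources_le:
  assumes feas: "g2g_feasible m X E x y rho A W F"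
  shows "2 * real (card (own_terminal_sources m A)) \<le> g2g_cost m x y rho F"
proof -
  let ?J = "own_terminal_sources m A"
  have "2 \<le> rho i + (\<Sum>f\<in>F i. edge_cost x y f)" if "i \<in> ?J" for i
    using that own_terminal_cost_ge_2[OF feas] unfolding own_terminal_sources_def by blast
  then have "(\<Sum>i\<in>?J. 2) \<le> (\<Sum>i\<in>?J. rho i + (\<Sum>f\<in>F i. edge_cost x y f))"
    by (rule sum_mono)
  also have "\<dots> \<le> g2g_cost m x y rho F"
    using partial_cost_le_cost[OF feas, of ?J] unfolding own_terminal_sources_def by blast
  finally show ?thesis by (simp add: mult.commute)
qed

end

theorem mainTheorem11:
  fixes E :: "'e set" and X :: "nat \<Rightarrow> 'e set" and m :: nat
    and D :: real and x y :: "nat \<Rightarrow> real^2" and C :: real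
  assumes finE: "finite E"
    and cover: "(\<Union>i\<in>{1..m}. X i) = E"
    and Dpos: "0 < D"
    and Dbig: "(D - 2)\<^sup>2 > 2 * real m"
    and xsep: "\<forall>i\<in>{1..m}. \<forall>j\<in>{1..m}. i \<noteq> j \<longrightarrow> dist (x i) (x j) \<ge> D"
    and ydist: "\<forall>i\<in>{1..m}. dist (x i) (y i) = 1"
    and opt_ex: "\<exists>rho A W F. g2g_feasible m X E x y rho A W F \<and> g2g_cost m x y rho F = C"
    and opt_min: "\<forall>rho A W F. g2g_feasible m X E x y rho A W F \<longrightarrow> C \<le> g2g_cost m x y rho F"
  shows "\<exists>J \<subseteq> {1..m}. (\<Union>i\<in>J. X i) = E \<and> real (card J) \<le> C / 2"
proof (cases "2 * real m \<le> C")
  case True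
  then show ?thesis using cover by (intro exI[of _ "{1..m}"]) auto
next
  case False
  interpret separated_instance m D x y
    using Dpos Dbig xsep ydist by unfold_locales auto
  obtain rho A W F where feas: "g2g_feasible m X E x y rho A W F"
    and cost: "g2g_cost m x y rho F = C"
    using opt_ex by blast
  let ?J = "own_terminal_sources m A"
  have "?J \<subseteq> {1..m}" unfolding own_terminal_sources_def by blast
  moreover have "(\<Union>i\<in>?J. X i) = E"
  proof (rule subset_antisym)
    show "(\<Union>i\<in>?J. X i) \<subseteq> E" using cover \<open>?J \<subseteq> {1..m}\<close> by blast
    show "E \<subseteq> (\<Union>i\<in>?J. X i)" using own_terminal_sources_cover[OF feas] cost False by simp
  qed
  moreover have "2 * real (card ?J) \<le> C" using card_own_terminal_sources_le[OF feas] cost by simp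
  ultimately show ?thesis by (intro exI[of _ ?J] conjI) simp_all
qed

end
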